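(* If $G$ and $H$ are graphs without isolated vertices, then $$\rho(G\times H)\geq\max\{\rho_o(G)\rho(H),\ \rho_o(H)\rho(G)\}.$$
   Context: All graphs are finite and simple. A packing of $G$ is a set $P\subseteq V(G)$ with $N[u]\cap N[v]=\emptyset$ for all distinct $u,v\in P$ ($N[\cdot]$ the closed neighborhood); $\rho(G)$ is the maximum size of a packing. An open packing is a set whose vertices have pairwise disjoint open neighborhoods; $\rho_o(G)$ is its maximum size. The direct product $G\times H$ has vertex set $V(G)\times V(H)$, with $(g,h)$ adjacent to $(g',h')$ iff $gg'\in E(G)$ and $hh'\in E(H)$. *)

theory Defs
  imports Main
begin

definition graph :: "'a set \<Rightarrow> ('a \<Rightarrow> 'a \<Rightarrow> bool) \<Rightarrow> bool" where
  "graph V E \<longleftrightarrow> finite V \<and> (\<forall>u v. E u v \<longrightarrow> u \<in> V \<and> v \<in> V)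
     \<and> (\<forall>u v. E u v \<longrightarrow> E v u) \<and> (\<forall>v. \<not> E v v)"

definition no_isolated :: "'a set \<Rightarrow> ('a \<Rightarrow> 'a \<Rightarrow> bool) \<Rightarrow> bool" where
  "no_isolated V E \<longleftrightarrow> (\<forall>v\<in>V. \<exists>u. E v u)"

definition open_nbhd :: "'a set \<Rightarrow> ('a \<Rightarrow> 'a \<Rightarrow> bool) \<Rightarrow> 'a \<Rightarrow> 'a set" where
  "open_nbhd V E v = {u \<in> V. E v u}"

definition closed_nbhd :: "'a set \<Rightarrow> ('a \<Rightarrow> 'a \<Rightarrow> bool) \<Rightarrow> 'a \<Rightarrow> 'a set" where
  "closed_nbhd V E v = insert v (open_nbhd V E v)"

definition packing :: "'a set \<Rightarrow> ('a \<Rightarrow> 'a \<Rightarrow> bool) \<Rightarrow> 'a set \<Rightarrow> bool" where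
  "packing V E P \<longleftrightarrow> P \<subseteq> V \<and>
     (\<forall>u\<in>P. \<forall>v\<in>P. u \<noteq> v \<longrightarrow> closed_nbhd V E u \<inter> closed_nbhd V E v = {})"

definition open_packing :: "'a set \<Rightarrow> ('a \<Rightarrow> 'a \<Rightarrow> bool) \<Rightarrow> 'a set \<Rightarrow> bool" where
  "open_packing V E P \<longleftrightarrow> P \<subseteq> V \<and>
     (\<forall>u\<in>P. \<forall>v\<in>P. u \<noteq> v \<longrightarrow> open_nbhd V E u \<inter> open_nbhd V E v = {})"

definition packing_number :: "'a set \<Rightarrow> ('a \<Rightarrow> 'a \<Rightarrow> bool) \<Rightarrow> nat" where
  "packing_number V E = Max (card ` {P. packing V E P})"

definition open_packing_number :: "'a set \<Rightarrow> ('a \<Rightarrow> 'a \<Rightarrow> bool) \<Rightarrow> nat" where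
  "open_packing_number V E = Max (card ` {P. open_packing V E P})"

definition dprod_edges :: "('a \<Rightarrow> 'a \<Rightarrow> bool) \<Rightarrow> ('b \<Rightarrow> 'b \<Rightarrow> bool)
    \<Rightarrow> ('a \<times> 'b) \<Rightarrow> ('a \<times> 'b) \<Rightarrow> bool" where
  "dprod_edges E F x y \<longleftrightarrow> E (fst x) (fst y) \<and> F (snd x) (snd y)"

end

theory Submission
  imports Defs
begin

text \<open>If \<open>Q\<close> is an open packing of \<open>G\<close> and \<open>P\<close> a packing of \<open>H\<close>, then \<open>Q \<times> P\<close> is a packing
  of \<open>G \<times> H\<close>: two of its vertices with different \<open>H\<close>-coordinates have disjoint closed
  neighbourhoods already in the \<open>H\<close>-projection, and two with the same \<open>H\<close>-coordinate \<open>h\<close>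
  share no neighbour since \<open>h\<close> has no loop, so a common neighbour would project to a common
  neighbour in \<open>G\<close>. Hence \<open>\<rho>(G \<times> H) \<ge> \<rho>\<^sub>o(G) \<rho>(H)\<close>, and the other bound follows by
  symmetry of the direct product.\<close>

lemma closed_nbhd_dprod:
  "closed_nbhd (V \<times> W) (dprod_edges E F) (g, h) =
     insert (g, h) (open_nbhd V E g \<times> open_nbhd W F h)"
  by (auto simp: closed_nbhd_def open_nbhd_def dprod_edges_def)

lemma closed_nbhd_dprod_swap:
  "closed_nbhd (V \<times> W) (dprod_edges E F) (prod.swap p) =
     prod.swap ` closed_nbhd (W \<times> V) (dprod_edges F E) p"
  by (cases p) (auto simp: closed_nbhd_dprod)

lemma packing_dprod_swap:
  assumes "packing (W \<times> V) (dprod_edges F E) S"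
  shows "packing (V \<times> W) (dprod_edges E F) (prod.swap ` S)"
  unfolding packing_def
proof (intro conjI ballI impI)
  show "prod.swap ` S \<subseteq> V \<times> W"
    using assms by (auto simp: packing_def)
next
  fix u v assume "u \<in> prod.swap ` S" "v \<in> prod.swap ` S" "u \<noteq> v"
  then obtain p q where "p \<in> S" "q \<in> S" "p \<noteq> q" "u = prod.swap p" "v = prod.swap q"
    by auto
  then show "closed_nbhd (V \<times> W) (dprod_edges E F) u \<inter> closed_nbhd (V \<times> W) (dprod_edges E F) v = {}"
    using assms by (auto simp: packing_def closed_nbhd_dprod_swap image_Int[symmetric])
qed

lemma packing_dprod_open_packing_packing:
  assumes irrefl: "\<And>h. \<not> F h h"
    and Q: "open_packing V E Q" and P: "packing W F P"
  shows "packing (V \<times> W) (dprod_edges E F) (Q \<times> P)"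
  unfolding packing_def
proof (intro conjI ballI impI)
  show "Q \<times> P \<subseteq> V \<times> W"
    using Q P by (auto simp: packing_def open_packing_def)
next
  fix u v assume "u \<in> Q \<times> P" "v \<in> Q \<times> P" "u \<noteq> v"
  then obtain g h g' h' where u: "u = (g, h)" and v: "v = (g', h')"
    and gh: "g \<in> Q" "g' \<in> Q" "h \<in> P" "h' \<in> P" and ne: "(g, h) \<noteq> (g', h')"
    by auto
  show "closed_nbhd (V \<times> W) (dprod_edges E F) u \<inter> closed_nbhd (V \<times> W) (dprod_edges E F) v = {}"
  proof (cases "h = h'")
    case False
    then have "closed_nbhd W F h \<inter> closed_nbhd W F h' = {}"
      using P gh by (auto simp: packing_def)
    then show ?thesis
      unfolding u v closed_nbhd_dprod by (auto simp: closed_nbhd_def)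
  next
    case True
    with ne have "g \<noteq> g'" by simp
    then have "open_nbhd V E g \<inter> open_nbhd V E g' = {}"
      using Q gh by (auto simp: open_packing_def)
    moreover have "h \<notin> open_nbhd W F h"
      using irrefl by (simp add: open_nbhd_def)
    ultimately show ?thesis
      unfolding u v closed_nbhd_dprod using True ne by auto
  qed
qed

lemma packing_dprod_packing_open_packing:
  assumes "\<And>g. \<not> E g g" and "packing V E P" and "open_packing W F Q"
  shows "packing (V \<times> W) (dprod_edges E F) (P \<times> Q)"
proof -
  have "packing (V \<times> W) (dprod_edges E F) (prod.swap ` (Q \<times> P))"
    using packing_dprod_swap packing_dprod_open_packing_packing assms by blast
  then show ?thesis by (simp add: product_swap)
qed

lemma Max_card_attained:
  assumes "finite V" "\<P> \<subseteq> Pow V" "{} \<in> \<P>"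
  shows "\<exists>P\<in>\<P>. card P = Max (card ` \<P>)"
    and "P \<in> \<P> \<Longrightarrow> card P \<le> Max (card ` \<P>)"
proof -
  have fin: "finite (card ` \<P>)"
    using assms(1,2) finite_subset by (blast intro: finite_imageI)
  have "Max (card ` \<P>) \<in> card ` \<P>"
    using Max_in[OF fin] assms(3) by blast
  then show "\<exists>P\<in>\<P>. card P = Max (card ` \<P>)" by force
  show "P \<in> \<P> \<Longrightarrow> card P \<le> Max (card ` \<P>)"
    using fin by simp
qed

lemma packing_number_attained:
  "finite V \<Longrightarrow> \<exists>P. packing V E P \<and> card P = packing_number V E"
  using Max_card_attained(1)[of V "{P. packing V E P}"]
  by (auto simp: packing_number_def packing_def)

lemma open_packing_number_attained:
  "finite V \<Longrightarrow> \<exists>Q. open_packing V E Q \<and> card Q = open_packing_number V E"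
  using Max_card_attained(1)[of V "{Q. open_packing V E Q}"]
  by (auto simp: open_packing_number_def open_packing_def)

lemma card_le_packing_number:
  "finite V \<Longrightarrow> packing V E P \<Longrightarrow> card P \<le> packing_number V E"
  using Max_card_attained(2)[of V "{P. packing V E P}" P]
  by (auto simp: packing_number_def packing_def)

theorem mainTheorem13:
  fixes V :: "'a set" and E :: "'a \<Rightarrow> 'a \<Rightarrow> bool"
    and W :: "'b set" and F :: "'b \<Rightarrow> 'b \<Rightarrow> bool"
  assumes "graph V E" and "graph W F"
    and "no_isolated V E" and "no_isolated W F"
  shows "packing_number (V \<times> W) (dprod_edges E F) \<ge>
           max (open_packing_number V E * packing_number W F)
               (open_packing_number W F * packing_number V E)"
proof -
  have fin: "finite V" "finite W" "finite (V \<times> W)"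
    and irrefl: "\<And>g. \<not> E g g" "\<And>h. \<not> F h h"
    using assms(1,2) by (auto simp: graph_def)
  obtain QV where QV: "open_packing V E QV" "card QV = open_packing_number V E"
    using open_packing_number_attained[OF fin(1)] by blast
  obtain QW where QW: "open_packing W F QW" "card QW = open_packing_number W F"
    using open_packing_number_attained[OF fin(2)] by blast
  obtain PV where PV: "packing V E PV" "card PV = packing_number V E"
    using packing_number_attained[OF fin(1)] by blast
  obtain PW where PW: "packing W F PW" "card PW = packing_number W F"
    using packing_number_attained[OF fin(2)] by blast
  have "card (QV \<times> PW) \<le> packing_number (V \<times> W) (dprod_edges E F)"
    using card_le_packing_number[OF fin(3)]
      packing_dprod_open_packing_packing[OF irrefl(2) QV(1) PW(1)] .
  moreover have "card (PV \<times> QW) \<le> packing_number (V \<times> W) (dprod_edges E F)"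
    using card_le_packing_number[OF fin(3)]
      packing_dprod_packing_open_packing[OF irrefl(1) PV(1) QW(1)] .
  ultimately show ?thesis
    using QV QW PV PW by (simp add: card_cartesian_product mult.commute)
qed

end
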